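(* Let $\mathbf{M}_1,\dots,\mathbf{M}_L$ be nonsingular $D\times D$ integer matrices that are pairwise commutative and coprime, and let $\mathbf{R}=\mathbf{M}_1\cdots\mathbf{M}_L\mathbf{U}$ with $\mathbf{U}$ any unimodular matrix (such $\mathbf{R}$ are lcrm's of the $\mathbf{M}_i$). Let $\mathbf{W}_i=\mathbf{M}_1\cdots\mathbf{M}_{i-1}\mathbf{M}_{i+1}\cdots\mathbf{M}_L$. Then there exist integer matrices $\widehat{\mathbf{W}}_i,\mathbf{Q}_i$ with $\mathbf{W}_i\widehat{\mathbf{W}}_i+\mathbf{M}_i\mathbf{Q}_i=\mathbf{I}$, and for any such choice every $\mathbf{m}\in\mathcal{N}(\mathbf{R})$ satisfies $\mathbf{m}=\big\langle\sum_{i=1}^L\mathbf{W}_i\widehat{\mathbf{W}}_i\langle\mathbf{m}\rangle_{\mathbf{M}_i}\big\rangle_{\mathbf{R}}$; in particular $\mathbf{m}\in\mathcal{N}(\mathbf{R})$ is uniquely determined by its remainders.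
   Context: All matrices are $D\times D$ integer matrices; unimodular means integer with determinant $\pm1$. Commuting nonsingular integer matrices are coprime if all their common left (equivalently right) divisors are unimodular, where $\mathbf{A}$ is a left divisor of $\mathbf{M}$ if $\mathbf{A}^{-1}\mathbf{M}$ is integer. An lcrm of $\mathbf{M}_1,\dots,\mathbf{M}_L$ is a nonsingular integer $\mathbf{R}=\mathbf{M}_i\mathbf{P}_i$ (integer $\mathbf{P}_i$, all $i$) such that every such common right multiple equals $\mathbf{R}\mathbf{A}$ for integer $\mathbf{A}$. $\mathcal{N}(\mathbf{M})=\{\mathbf{k}\in\mathbb{Z}^D:\mathbf{k}=\mathbf{M}\mathbf{x},\ \mathbf{x}\in[0,1)^D\}$; $\langle\mathbf{m}\rangle_{\mathbf{M}}$ is the unique $\mathbf{r}\in\mathcal{N}(\mathbf{M})$ with $\mathbf{m}-\mathbf{r}\in\mathbf{M}\mathbb{Z}^D$. *)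

theory Defs
  imports "HOL-Analysis.Analysis"
begin

type_synonym 'n imat = "int ^ 'n ^ 'n"
type_synonym 'n ivec = "int ^ 'n"

definition nonsingular :: "'n::finite imat \<Rightarrow> bool" where
  "nonsingular A \<longleftrightarrow> det A \<noteq> 0"

definition unimodular :: "'n::finite imat \<Rightarrow> bool" where
  "unimodular A \<longleftrightarrow> det A = 1 \<or> det A = -1"

definition left_divisor :: "'n::finite imat \<Rightarrow> 'n imat \<Rightarrow> bool" where
  "left_divisor A M \<longleftrightarrow> nonsingular A \<and> (\<exists>P :: 'n imat. M = A ** P)"

definition mat_coprime :: "'n::finite imat \<Rightarrow> 'n imat \<Rightarrow> bool" where
  "mat_coprime A B \<longleftrightarrow> (\<forall>C. left_divisor C A \<and> left_divisor C B \<longrightarrow> unimodular C)"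

definition rvec :: "'n::finite ivec \<Rightarrow> real ^ 'n" where
  "rvec k = (\<chi> i. real_of_int (k $ i))"

definition rmat :: "'n::finite imat \<Rightarrow> real ^ 'n ^ 'n" where
  "rmat M = (\<chi> i j. real_of_int (M $ i $ j))"

definition fund :: "'n::finite imat \<Rightarrow> 'n ivec set" where
  "fund M = {k. \<exists>x :: real ^ 'n. (\<forall>i. 0 \<le> x $ i \<and> x $ i < 1) \<and> rvec k = rmat M *v x}"

definition rem :: "'n::finite imat \<Rightarrow> 'n ivec \<Rightarrow> 'n ivec" where
  "rem M m = (THE r. r \<in> fund M \<and> (\<exists>z :: 'n ivec. m - r = M *v z))"

definition mprod :: "(nat \<Rightarrow> 'n::finite imat) \<Rightarrow> nat list \<Rightarrow> 'n imat" where
  "mprod M is = foldr (\<lambda>i A. M i ** A) is (mat 1)"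

end

theory Submission
  imports Defs
begin

(*
  Coprimality of M_i with each M_j gives, by a minimal-determinant argument on the lattice
  spanned by the columns of both matrices, Bezout identities M_i X + M_j Y = I, and these
  multiply up to a Bezout identity between M_i and the product W_i of the others.  Hence
  sum_j W_j Wh_j r_j == r_i modulo M_i.  Conversely, vectors congruent modulo every M_i are
  congruent modulo their product: by the Bezout identity, multiplication by M_i is onto, hence
  injective, on the finite group Z^D / M_j Z^D.  A unimodular factor does not change the
  lattice, and N(R) is a system of representatives modulo R, so m is recovered from its
  remainders.
*)

lemma det_rmat: "det (rmat M) = real_of_int (det M)"
  unfolding det_def rmat_def by (simp add: of_int_sum of_int_prod)

lemma rvec_mult: "rvec (M *v z) = rmat M *v rvec z"
  unfolding rvec_def rmat_def matrix_vector_mult_def by (simp add: of_int_sum)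

lemma rvec_diff: "rvec (a - b) = rvec a - rvec b"
  unfolding rvec_def by (simp add: vec_eq_iff)

lemma rvec_eq_iff: "rvec a = rvec b \<longleftrightarrow> a = b"
  unfolding rvec_def by (simp add: vec_eq_iff)

lemma nonsingular_rmat_cancel:
  assumes "nonsingular M" "rmat M *v x = rmat M *v y" shows "x = y"
proof -
  have "invertible (rmat M)"
    using assms(1) by (simp add: invertible_det_nz det_rmat nonsingular_def)
  then obtain B where B: "B ** rmat M = mat 1" unfolding invertible_def by blast
  then have "B *v (rmat M *v x) = B *v (rmat M *v y)" using assms(2) by simp
  then show ?thesis using B by (simp add: matrix_vector_mul_assoc)
qed

lemma nonsingular_rmat_solvable: "nonsingular M \<Longrightarrow> \<exists>x. rmat M *v x = b"
  using cramer[of "rmat M" _ b] by (auto simp: det_rmat nonsingular_def)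

lemma det_replace_column_rmat:
  "det (\<chi> i j. if j = k then rvec v $ i else rmat C $ i $ j)
   = real_of_int (det (\<chi> i j. if j = k then v $ i else C $ i $ j))"
proof -
  have "(\<chi> i j. if j = k then rvec v $ i else rmat C $ i $ j)
      = rmat (\<chi> i j. if j = k then v $ i else C $ i $ j)"
    by (simp add: vec_eq_iff rvec_def rmat_def)
  then show ?thesis by (simp add: det_rmat)
qed

lemma unimodular_solvable:
  fixes U :: "'n::finite imat"
  assumes "unimodular U" shows "\<exists>w. U *v w = v"
proof -
  define w where "w = (\<chi> k. det (\<chi> i j. if j = k then v $ i else U $ i $ j) * det U)"
  have d: "det (rmat U) = 1 \<or> det (rmat U) = -1"
    using assms by (auto simp: unimodular_def det_rmat)
  have "rvec w = (\<chi> k. det (\<chi> i j. if j = k then rvec v $ i else rmat U $ i $ j) / det (rmat U))"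
    using d unfolding w_def det_replace_column_rmat by (auto simp: rvec_def vec_eq_iff det_rmat)
  then have "rmat U *v rvec w = rvec v"
    using cramer[of "rmat U" "rvec w" "rvec v"] d by auto
  then show ?thesis by (metis rvec_eq_iff rvec_mult)
qed

definition mat_cong :: "'n::finite imat \<Rightarrow> 'n ivec \<Rightarrow> 'n ivec \<Rightarrow> bool" where
  "mat_cong M u v \<longleftrightarrow> (\<exists>z. u - v = M *v z)"

lemma mat_cong_refl [simp]: "mat_cong M u u"
  unfolding mat_cong_def by (metis diff_self matrix_vector_mult_0_right)

lemma matrix_vector_mult_uminus: "(A::int^'n::finite^'m) *v (- u) = - (A *v u)"
  using matrix_vector_mult_diff_distrib[of A 0 u] by simp

lemma mat_cong_sym: "mat_cong M u v \<Longrightarrow> mat_cong M v u"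
  unfolding mat_cong_def by (metis minus_diff_eq matrix_vector_mult_uminus)

lemma mat_cong_trans: "mat_cong M u v \<Longrightarrow> mat_cong M v w \<Longrightarrow> mat_cong M u w"
  unfolding mat_cong_def
  by (metis (no_types, lifting) diff_add_cancel add_diff_eq matrix_vector_right_distrib)

lemma mat_cong_add: "mat_cong M u v \<Longrightarrow> mat_cong M u' v' \<Longrightarrow> mat_cong M (u + u') (v + v')"
  unfolding mat_cong_def by (metis add_diff_add matrix_vector_right_distrib)

lemma mat_cong_sum:
  "(\<And>j. j \<in> S \<Longrightarrow> mat_cong M (f j) (g j)) \<Longrightarrow> mat_cong M (\<Sum>j\<in>S. f j) (\<Sum>j\<in>S. g j)"
  by (induction S rule: infinite_finite_induct) (auto intro: mat_cong_add)

lemma mat_cong_multiple: "mat_cong M ((M ** X) *v u) 0"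
  unfolding mat_cong_def by (metis diff_zero matrix_vector_mul_assoc)

lemma mat_cong_mult_unimodular:
  assumes "unimodular U" "mat_cong A u v" shows "mat_cong (A ** U) u v"
proof -
  obtain z where "u - v = A *v z" using assms(2) unfolding mat_cong_def by blast
  moreover obtain w where "U *v w = z" using unimodular_solvable[OF assms(1)] by blast
  ultimately show ?thesis unfolding mat_cong_def by (metis matrix_vector_mul_assoc)
qed

lemma mat_cong_commuting:
  assumes "A ** M = M ** A" "mat_cong M u v" shows "mat_cong M (A *v u) (A *v v)"
proof -
  obtain z where "u - v = M *v z" using assms(2) unfolding mat_cong_def by blast
  then have "A *v u - A *v v = M *v (A *v z)"
    by (simp add: assms(1) matrix_vector_mul_assoc flip: matrix_vector_mult_diff_distrib)
  then show ?thesis unfolding mat_cong_def by blast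
qed

lemma fund_cong_eq:
  assumes "nonsingular M" "r \<in> fund M" "r' \<in> fund M" "mat_cong M r r'"
  shows "r = r'"
proof -
  obtain x where x: "\<forall>i. 0 \<le> x $ i \<and> x $ i < 1" "rvec r = rmat M *v x"
    using assms(2) unfolding fund_def by blast
  obtain x' where x': "\<forall>i. 0 \<le> x' $ i \<and> x' $ i < 1" "rvec r' = rmat M *v x'"
    using assms(3) unfolding fund_def by blast
  obtain z where z: "r - r' = M *v z" using assms(4) unfolding mat_cong_def by blast
  have "rmat M *v (x - x') = rvec (r - r')"
    using x x' by (simp add: rvec_diff matrix_vector_mult_diff_distrib)
  then have "rmat M *v (x - x') = rmat M *v rvec z" by (simp add: z rvec_mult)
  then have e: "x - x' = rvec z" using nonsingular_rmat_cancel[OF assms(1)] by blast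
  have "z $ i = 0" for i
  proof -
    have "x $ i - x' $ i = real_of_int (z $ i)" using e by (simp add: vec_eq_iff rvec_def)
    moreover have "-1 < x $ i - x' $ i" "x $ i - x' $ i < 1"
      using x(1) x'(1) by (smt (verit))+
    ultimately show ?thesis by linarith
  qed
  then have "z = 0" by (simp add: vec_eq_iff)
  then show ?thesis using z by simp
qed

text \<open>The representative is M times the fractional part of the real solution of M x = m.\<close>

lemma ex_fund_cong:
  assumes "nonsingular M" shows "\<exists>r\<in>fund M. mat_cong M m r"
proof -
  obtain x where x: "rmat M *v x = rvec m" using nonsingular_rmat_solvable[OF assms] by blast
  define f :: "int ^ 'a" where "f = (\<chi> i. \<lfloor>x $ i\<rfloor>)"
  define r where "r = m - M *v f"
  have "\<forall>i. 0 \<le> (x - rvec f) $ i \<and> (x - rvec f) $ i < 1"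
    using floor_correct by (simp add: f_def rvec_def) linarith
  moreover have "rvec r = rmat M *v (x - rvec f)"
    unfolding r_def rvec_diff rvec_mult by (simp add: x matrix_vector_mult_diff_distrib)
  ultimately have "r \<in> fund M" unfolding fund_def by blast
  moreover have "mat_cong M m r" unfolding mat_cong_def r_def by auto
  ultimately show ?thesis by blast
qed

lemma rem_mat_cong: "rem M m = (THE r. r \<in> fund M \<and> mat_cong M m r)"
  unfolding rem_def mat_cong_def ..

lemma rem_in_fund_cong:
  assumes "nonsingular M" shows "rem M m \<in> fund M \<and> mat_cong M m (rem M m)"
  unfolding rem_mat_cong
proof (rule theI')
  show "\<exists>!r. r \<in> fund M \<and> mat_cong M m r"
    using ex_fund_cong[OF assms] fund_cong_eq[OF assms] mat_cong_sym mat_cong_trans by metis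
qed

lemma rem_in_fund: "nonsingular M \<Longrightarrow> rem M m \<in> fund M"
  using rem_in_fund_cong by blast

lemma mat_cong_rem: "nonsingular M \<Longrightarrow> mat_cong M m (rem M m)"
  using rem_in_fund_cong by blast

lemma rem_eqI: "nonsingular M \<Longrightarrow> r \<in> fund M \<Longrightarrow> mat_cong M m r \<Longrightarrow> rem M m = r"
  using fund_cong_eq rem_in_fund mat_cong_rem mat_cong_sym mat_cong_trans by metis

lemma rem_eq_rem_iff: "nonsingular M \<Longrightarrow> rem M u = rem M v \<longleftrightarrow> mat_cong M u v"
  using rem_eqI rem_in_fund mat_cong_rem mat_cong_sym mat_cong_trans by metis

lemma finite_fund: "finite (fund (M :: 'n::finite imat))"
proof -
  define B where "B = (\<Sum>i\<in>UNIV. \<Sum>j\<in>UNIV. \<bar>M $ i $ j\<bar>)"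
  have "fund M \<subseteq> vec_lambda ` (PiE UNIV (\<lambda>_. {-B..B}))"
  proof
    fix k assume "k \<in> fund M"
    then obtain x where x: "\<forall>i. 0 \<le> x $ i \<and> x $ i < 1" "rvec k = rmat M *v x"
      unfolding fund_def by blast
    have "\<bar>k $ i\<bar> \<le> B" for i
    proof -
      have "real_of_int (k $ i) = (\<Sum>j\<in>UNIV. real_of_int (M $ i $ j) * x $ j)"
        using x(2) unfolding rvec_def rmat_def matrix_vector_mult_def by (simp add: vec_eq_iff)
      then have "\<bar>real_of_int (k $ i)\<bar> \<le> (\<Sum>j\<in>UNIV. \<bar>real_of_int (M $ i $ j) * x $ j\<bar>)"
        by (metis sum_abs)
      also have "\<dots> \<le> (\<Sum>j\<in>UNIV. real_of_int \<bar>M $ i $ j\<bar>)"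
        using x(1) by (intro sum_mono) (simp add: abs_mult mult_left_le less_imp_le)
      also have "\<dots> \<le> real_of_int B"
        unfolding B_def of_int_sum by (rule member_le_sum) (auto intro: sum_nonneg)
      finally show ?thesis by linarith
    qed
    then have "vec_nth k \<in> PiE UNIV (\<lambda>_. {-B..B})" by (auto simp: abs_le_iff) (metis minus_le_iff)
    then show "k \<in> vec_lambda ` (PiE UNIV (\<lambda>_. {-B..B}))"
      by (intro image_eqI[where x = "vec_nth k"]) simp_all
  qed
  moreover have "finite (PiE UNIV (\<lambda>_::'n. {-B..B}))" by (rule finite_PiE) auto
  ultimately show ?thesis by (meson finite_imageI finite_subset)
qed

text \<open>
  Multiplication by A is onto the finite residue system \<N>(B), since A X \<equiv> I modulo B;
  hence it is injective.
\<close>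

lemma mat_cong_cancel_left:
  assumes nB: "nonsingular B" and AB: "A ** B = B ** A" and bez: "A ** X + B ** Y = mat 1"
    and cong: "mat_cong B (A *v a) (A *v b)"
  shows "mat_cong B a b"
proof -
  define f where "f r = rem B (A *v r)" for r
  have "fund B \<subseteq> f ` fund B"
  proof
    fix t assume t: "t \<in> fund B"
    have "mat_cong B (A *v rem B (X *v t)) (A *v (X *v t))"
      using mat_cong_commuting[OF AB mat_cong_sym[OF mat_cong_rem[OF nB]]] .
    moreover have "A *v (X *v t) = t - (B ** Y) *v t"
      using bez by (simp add: matrix_vector_mul_assoc eq_diff_eq flip: matrix_vector_mult_add_rdistrib)
    then have "A *v (X *v t) - t = B *v (- (Y *v t))"
      by (simp add: matrix_vector_mult_uminus matrix_vector_mul_assoc)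
    then have "mat_cong B (A *v (X *v t)) t" unfolding mat_cong_def by blast
    ultimately have "f (rem B (X *v t)) = t"
      unfolding f_def using rem_eqI[OF nB t] mat_cong_trans by blast
    then show "t \<in> f ` fund B" using rem_in_fund[OF nB] by (metis image_eqI)
  qed
  then have "inj_on f (fund B)" by (rule finite_surj_inj[OF finite_fund])
  moreover have "f (rem B a) = f (rem B b)"
    unfolding f_def rem_eq_rem_iff[OF nB]
    using mat_cong_commuting[OF AB] mat_cong_rem[OF nB] mat_cong_sym mat_cong_trans cong
    by metis
  ultimately have "rem B a = rem B b" using rem_in_fund[OF nB] by (meson inj_onD)
  then show ?thesis using rem_eq_rem_iff[OF nB] by blast
qed

lemma mat_cong_mult_of_bezout:
  assumes nB: "nonsingular B" and AB: "A ** B = B ** A" and bez: "A ** X + B ** Y = mat 1"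
    and "mat_cong A u v" "mat_cong B u v"
  shows "mat_cong (A ** B) u v"
proof -
  obtain a b where a: "u - v = A *v a" and b: "u - v = B *v b"
    using assms(4,5) unfolding mat_cong_def by blast
  have "mat_cong B (A *v a) (A *v 0)"
    unfolding mat_cong_def using a b by (metis diff_zero matrix_vector_mult_0_right)
  then obtain c where "a = B *v c"
    using mat_cong_cancel_left[OF nB AB bez] unfolding mat_cong_def by fastforce
  then show ?thesis unfolding mat_cong_def using a by (metis matrix_vector_mul_assoc)
qed

lemma matrix_vector_mult_axis: "((A::int^'n::finite^'m) *v axis j 1) $ i = A $ i $ j"
  unfolding matrix_vector_mult_def axis_def by (simp add: if_distrib cong: if_cong)

lemma matrix_mult_columns: "((A::int^'n::finite^'m) ** (\<chi> i j. p j $ i)) $ i $ j = (A *v p j) $ i"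
  unfolding matrix_matrix_mult_def matrix_vector_mult_def by simp

lemma matrix_vector_mult_smult: "(A::int^'n::finite^'m) *v (c *s u) = c *s (A *v u)"
  unfolding matrix_vector_mult_def by (simp add: vec_eq_iff sum_distrib_left mult_ac)

lemma left_factor_of_columns:
  assumes "\<And>z. mat_cong C (A *v z) 0" shows "\<exists>P. A = C ** P"
proof -
  have "\<forall>j. \<exists>w. A *v axis j 1 = C *v w" using assms unfolding mat_cong_def by simp
  then obtain p where p: "\<And>j. A *v axis j 1 = C *v p j" by metis
  have "A = C ** (\<chi> i j. p j $ i)"
    by (simp add: vec_eq_iff matrix_mult_columns flip: p) (simp add: matrix_vector_mult_axis)
  then show ?thesis by blast
qed

lemma bezout_of_spanning:
  fixes A B :: "'n::finite imat"
  assumes "\<And>v. \<exists>x y. v = A *v x + B *v y"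
  shows "\<exists>X Y. A ** X + B ** Y = mat 1"
proof -
  have "\<forall>j. \<exists>x y. axis j 1 = A *v x + B *v y" using assms by blast
  then obtain x y where xy: "\<And>j. axis j 1 = A *v x j + B *v y j" by metis
  have "(A ** (\<chi> i j. x j $ i) + B ** (\<chi> i j. y j $ i)) $ i $ j = axis j 1 $ i" for i j
    by (simp add: matrix_mult_columns xy)
  then have "A ** (\<chi> i j. x j $ i) + B ** (\<chi> i j. y j $ i) = mat 1"
    by (simp add: vec_eq_iff axis_def mat_def)
  then show ?thesis by blast
qed

lemma replace_column_mult:
  "(\<chi> i j. if j = k then v $ i else C $ i $ j) *v z
   = (C::int^'n::finite^'n) *v (\<chi> j. if j = k then 0 else z $ j) + z $ k *s v"
  unfolding matrix_vector_mult_def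
  by (simp add: vec_eq_iff if_distrib if_distribR sum.delta' mult.commute cong: if_cong)
    (simp add: sum.If_cases Diff_eq[symmetric] sum.remove[of UNIV k] algebra_simps)

text \<open>
  If v is not in the lattice C Z^D, reduce it modulo C to v - C w = C x' with some
  coordinate 0 < x'_k < 1; by Cramer's rule, putting v - C w into column k of C scales
  the determinant by x'_k.
\<close>

lemma replace_column_det_descent:
  fixes C :: "'n::finite imat"
  assumes nC: "nonsingular C" and v: "\<not> mat_cong C v 0"
  obtains k w where "det (\<chi> i j. if j = k then (v - C *v w) $ i else C $ i $ j) \<noteq> 0"
    and "\<bar>det (\<chi> i j. if j = k then (v - C *v w) $ i else C $ i $ j)\<bar> < \<bar>det C\<bar>"
proof -
  obtain x where x: "rmat C *v x = rvec v" using nonsingular_rmat_solvable[OF nC] by blast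
  define f :: "int ^ 'n" where "f = (\<chi> i. \<lfloor>x $ i\<rfloor>)"
  define x' where "x' = x - rvec f"
  obtain k where k: "x $ k \<noteq> of_int \<lfloor>x $ k\<rfloor>"
  proof (rule ccontr)
    assume "\<not> thesis"
    then have "\<forall>k. x $ k = of_int \<lfloor>x $ k\<rfloor>" using that by blast
    then have "x = rvec f" by (simp add: vec_eq_iff f_def rvec_def)
    then have "v = C *v f" using x by (metis rvec_eq_iff rvec_mult)
    then show False using v unfolding mat_cong_def by (metis diff_zero)
  qed
  have xk: "0 < x' $ k" "x' $ k < 1"
    using k floor_correct[of "x $ k"] by (auto simp: x'_def f_def rvec_def) linarith+
  define C' where "C' = (\<chi> i j. if j = k then (v - C *v f) $ i else C $ i $ j)"
  have "rvec (v - C *v f) = rmat C *v x'"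
    unfolding x'_def rvec_diff rvec_mult by (simp add: x matrix_vector_mult_diff_distrib)
  then have "det (\<chi> i j. if j = k then rvec (v - C *v f) $ i else rmat C $ i $ j)
      = x' $ k * det (rmat C)"
    by (simp only: cramer_lemma)
  then have det_C': "real_of_int (det C') = x' $ k * real_of_int (det C)"
    unfolding C'_def det_replace_column_rmat det_rmat .
  have "det C \<noteq> 0" using nC by (simp add: nonsingular_def)
  then have "real_of_int (det C') \<noteq> 0" "\<bar>real_of_int (det C')\<bar> < \<bar>real_of_int (det C)\<bar>"
    using xk by (simp_all add: det_C' abs_mult)
  then have "det C' \<noteq> 0" "\<bar>det C'\<bar> < \<bar>det C\<bar>" by (simp_all flip: of_int_abs)
  then show thesis using that[of k f] unfolding C'_def by blast
qed

text \<open>Every full-rank lattice in Z^D has a basis: a full-rank sublattice of minimal determinant.\<close>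

lemma full_rank_lattice_basis:
  fixes A :: "'n::finite imat"
  assumes "nonsingular A" "\<And>z. A *v z \<in> L"
    and L_comb: "\<And>u v c. u \<in> L \<Longrightarrow> v \<in> L \<Longrightarrow> u + c *s v \<in> L"
  shows "\<exists>C. nonsingular C \<and> (\<forall>z. C *v z \<in> L) \<and> (\<forall>v\<in>L. mat_cong C v 0)"
proof -
  define S where "S = {C. nonsingular C \<and> (\<forall>z. C *v z \<in> L)}"
  have "A \<in> S" unfolding S_def using assms by blast
  then obtain C where "C \<in> S" and C_min: "\<And>C'. C' \<in> S \<Longrightarrow> nat \<bar>det C\<bar> \<le> nat \<bar>det C'\<bar>"
    using ex_has_least_nat[of "\<lambda>C. C \<in> S" A "\<lambda>C. nat \<bar>det C\<bar>"] by blast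
  then have nC: "nonsingular C" and CL: "\<And>z. C *v z \<in> L" unfolding S_def by auto
  have "mat_cong C v 0" if "v \<in> L" for v
  proof (rule ccontr)
    assume "\<not> mat_cong C v 0"
    then obtain k w where
      det_C': "det (\<chi> i j. if j = k then (v - C *v w) $ i else C $ i $ j) \<noteq> 0"
      "\<bar>det (\<chi> i j. if j = k then (v - C *v w) $ i else C $ i $ j)\<bar> < \<bar>det C\<bar>"
      by (rule replace_column_det_descent[OF nC])
    have "(\<chi> i j. if j = k then (v - C *v w) $ i else C $ i $ j) *v z \<in> L" for z
    proof -
      have "C *v y + c *s (v - C *v w) = C *v (y - c *s w) + c *s v" for y c
        by (simp add: algebra_simps matrix_vector_mult_smult)
      then show ?thesis unfolding replace_column_mult using L_comb CL \<open>v \<in> L\<close> by metis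
    qed
    then have "(\<chi> i j. if j = k then (v - C *v w) $ i else C $ i $ j) \<in> S"
      unfolding S_def nonsingular_def using det_C' by blast
    from C_min[OF this] det_C' show False by linarith
  qed
  then show ?thesis using nC CL by blast
qed

lemma bezout_of_mat_coprime:
  fixes A B :: "'n::finite imat"
  assumes nA: "nonsingular A" and cp: "mat_coprime A B"
  shows "\<exists>X Y. A ** X + B ** Y = mat 1"
proof -
  define L where "L = {A *v x + B *v y | x y. True}"
  have "A *v z \<in> L" "B *v z \<in> L" for z
    unfolding L_def by (metis (mono_tags) add_0 add.right_neutral matrix_vector_mult_0_right mem_Collect_eq)+
  moreover have "u + c *s v \<in> L" if uv: "u \<in> L" "v \<in> L" for u v c
  proof -
    obtain x y x' y' where "u = A *v x + B *v y" "v = A *v x' + B *v y'"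
      using uv unfolding L_def by blast
    then have "u + c *s v = A *v (x + c *s x') + B *v (y + c *s y')"
      by (simp add: algebra_simps matrix_vector_mult_smult vector_add_ldistrib)
    then show ?thesis unfolding L_def by blast
  qed
  ultimately obtain C where nC: "nonsingular C" and CL: "\<And>z. C *v z \<in> L"
    and span: "\<And>v. v \<in> L \<Longrightarrow> mat_cong C v 0"
    using full_rank_lattice_basis[OF nA] by metis
  have "left_divisor C A" "left_divisor C B"
    unfolding left_divisor_def using nC span \<open>\<And>z. A *v z \<in> L\<close> \<open>\<And>z. B *v z \<in> L\<close>
    by (auto intro: left_factor_of_columns)
  then have "unimodular C" using cp unfolding mat_coprime_def by blast
  have "\<exists>x y. v = A *v x + B *v y" for v
  proof -
    obtain w where "C *v w = v" using unimodular_solvable[OF \<open>unimodular C\<close>] by blast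
    then show ?thesis using CL[of w] unfolding L_def by blast
  qed
  then show ?thesis by (rule bezout_of_spanning)
qed

lemma matrix_add_rdistrib: "(B + C) ** A = B ** A + C ** (A :: 'a::semiring_1^'n::finite^'n)"
  by (vector matrix_matrix_mult_def sum.distrib[symmetric] distrib_right)

lemma bezout_mult_right:
  fixes A B C :: "'n::finite imat"
  assumes AB: "A ** B = B ** A"
    and bez1: "A ** X1 + B ** Y1 = mat 1" and bez2: "A ** X2 + C ** Y2 = mat 1"
  shows "A ** (X1 + B ** X2 ** Y1) + (B ** C) ** (Y2 ** Y1) = mat 1"
proof -
  have "B ** Y1 = B ** (A ** X2 + C ** Y2) ** Y1" using bez2 by simp
  also have "\<dots> = A ** (B ** X2 ** Y1) + (B ** C) ** (Y2 ** Y1)"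
    by (simp add: matrix_add_ldistrib matrix_add_rdistrib matrix_mul_assoc AB)
  finally show ?thesis using bez1 by (simp add: matrix_add_ldistrib add.assoc)
qed

lemma mprod_Nil [simp]: "mprod M [] = mat 1"
  by (simp add: mprod_def)

lemma mprod_Cons [simp]: "mprod M (i # xs) = M i ** mprod M xs"
  by (simp add: mprod_def)

locale commuting_coprime_family =
  fixes M :: "nat \<Rightarrow> 'n::finite imat" and I :: "nat set"
  assumes nonsingular_M: "i \<in> I \<Longrightarrow> nonsingular (M i)"
    and commute_M: "i \<in> I \<Longrightarrow> j \<in> I \<Longrightarrow> M i ** M j = M j ** M i"
    and coprime_M: "i \<in> I \<Longrightarrow> j \<in> I \<Longrightarrow> i \<noteq> j \<Longrightarrow> mat_coprime (M i) (M j)"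
begin

lemma mprod_commute: "set xs \<subseteq> I \<Longrightarrow> i \<in> I \<Longrightarrow> M i ** mprod M xs = mprod M xs ** M i"
proof (induction xs)
  case (Cons j xs)
  then have "M i ** M j = M j ** M i" "M i ** mprod M xs = mprod M xs ** M i"
    by (auto intro: commute_M)
  then show ?case by (metis matrix_mul_assoc mprod_Cons)
qed simp

lemma nonsingular_mprod: "set xs \<subseteq> I \<Longrightarrow> nonsingular (mprod M xs)"
  by (induction xs) (auto simp: nonsingular_def det_mul dest: nonsingular_M)

lemma mprod_left_factor: "set xs \<subseteq> I \<Longrightarrow> i \<in> set xs \<Longrightarrow> \<exists>P. mprod M xs = M i ** P"
proof (induction xs)
  case (Cons j xs)
  show ?case
  proof (cases "j = i")
    case False
    with Cons obtain P where "mprod M xs = M i ** P" by auto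
    moreover have "M j ** M i = M i ** M j" using Cons.prems by (auto intro: commute_M)
    ultimately have "mprod M (j # xs) = M i ** (M j ** P)" by (simp add: matrix_mul_assoc)
    then show ?thesis by blast
  qed auto
qed simp

lemma mprod_bezout:
  "set xs \<subseteq> I \<Longrightarrow> i \<in> I \<Longrightarrow> i \<notin> set xs \<Longrightarrow> \<exists>X Y. M i ** X + mprod M xs ** Y = mat 1"
proof (induction xs)
  case Nil
  have "M i ** 0 + mprod M [] ** mat 1 = mat 1" by simp
  then show ?case by blast
next
  case (Cons j xs)
  then have ij: "i \<in> I" "j \<in> I" "i \<noteq> j" by auto
  obtain X1 Y1 where "M i ** X1 + M j ** Y1 = mat 1"
    using bezout_of_mat_coprime[OF nonsingular_M coprime_M] ij by blast
  moreover obtain X2 Y2 where "M i ** X2 + mprod M xs ** Y2 = mat 1" using Cons by auto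
  moreover have "M i ** M j = M j ** M i" using commute_M ij by blast
  ultimately show ?case using bezout_mult_right by (metis mprod_Cons)
qed

lemma bezout_complement:
  assumes "set xs \<subseteq> I" "i \<in> I"
  shows "\<exists>Wh Q. mprod M (filter (\<lambda>j. j \<noteq> i) xs) ** Wh + M i ** Q = mat 1"
proof -
  obtain X Y where "M i ** X + mprod M (filter (\<lambda>j. j \<noteq> i) xs) ** Y = mat 1"
    using mprod_bezout[of "filter (\<lambda>j. j \<noteq> i) xs" i] assms by auto
  then show ?thesis by (metis add.commute)
qed

lemma mat_cong_mprod:
  "set xs \<subseteq> I \<Longrightarrow> distinct xs \<Longrightarrow> (\<And>i. i \<in> set xs \<Longrightarrow> mat_cong (M i) u v)
    \<Longrightarrow> mat_cong (mprod M xs) u v"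
proof (induction xs)
  case (Cons i xs)
  then have xs: "set xs \<subseteq> I" and i: "i \<in> I" "i \<notin> set xs" by auto
  obtain X Y where "M i ** X + mprod M xs ** Y = mat 1" using mprod_bezout[OF xs i] by blast
  from mat_cong_mult_of_bezout[OF nonsingular_mprod[OF xs] mprod_commute[OF xs i(1)] this]
  show ?case using Cons by simp
qed (simp add: mat_cong_def exI[of _ "u - v"])

lemma crt_sum_cong:
  assumes xs: "set xs \<subseteq> I" and i: "i \<in> set xs"
    and bez: "mprod M (filter (\<lambda>k. k \<noteq> i) xs) ** Wh i + M i ** Q i = mat 1"
  shows "mat_cong (M i) (\<Sum>j\<in>set xs. (mprod M (filter (\<lambda>k. k \<noteq> j) xs) ** Wh j) *v r j) (r i)"
proof -
  have "mat_cong (M i) ((mprod M (filter (\<lambda>k. k \<noteq> j) xs) ** Wh j) *v r j) (if j = i then r i else 0)"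
    if j: "j \<in> set xs" for j
  proof (cases "j = i")
    case True
    have "(mprod M (filter (\<lambda>k. k \<noteq> i) xs) ** Wh i) *v r i = r i - (M i ** Q i) *v r i"
      using bez by (simp add: eq_diff_eq flip: matrix_vector_mult_add_rdistrib)
    then have "(mprod M (filter (\<lambda>k. k \<noteq> i) xs) ** Wh i) *v r i - r i = M i *v (- (Q i *v r i))"
      by (simp add: matrix_vector_mult_uminus matrix_vector_mul_assoc)
    then show ?thesis using True unfolding mat_cong_def by auto
  next
    case False
    then obtain P where "mprod M (filter (\<lambda>k. k \<noteq> j) xs) = M i ** P"
      using mprod_left_factor[of "filter (\<lambda>k. k \<noteq> j) xs" i] xs i by auto
    then show ?thesis
      using False mat_cong_multiple[of "M i" "P ** Wh j" "r j"] by (simp add: matrix_mul_assoc)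
  qed
  then have "mat_cong (M i) (\<Sum>j\<in>set xs. (mprod M (filter (\<lambda>k. k \<noteq> j) xs) ** Wh j) *v r j)
      (\<Sum>j\<in>set xs. if j = i then r i else 0)"
    by (rule mat_cong_sum)
  then show ?thesis using i by simp
qed

end

theorem theorem2:
  fixes M :: "nat \<Rightarrow> int ^ 'n::finite ^ 'n" and L :: nat and U :: "int ^ 'n ^ 'n"
  assumes nonsing: "\<forall>i\<in>{1..L}. nonsingular (M i)"
    and comm: "\<forall>i\<in>{1..L}. \<forall>j\<in>{1..L}. M i ** M j = M j ** M i"
    and copr: "\<forall>i\<in>{1..L}. \<forall>j\<in>{1..L}. i \<noteq> j \<longrightarrow> mat_coprime (M i) (M j)"
    and unim: "unimodular U"
  defines "R \<equiv> mprod M [1..<L+1] ** U"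
    and "W \<equiv> (\<lambda>i. mprod M (filter (\<lambda>j. j \<noteq> i) [1..<L+1]))"
  shows "(\<forall>i\<in>{1..L}. \<exists>Wh Q :: int ^ 'n ^ 'n. W i ** Wh + M i ** Q = mat 1)
    \<and> (\<forall>Wh Q :: nat \<Rightarrow> int ^ 'n ^ 'n.
          (\<forall>i\<in>{1..L}. W i ** Wh i + M i ** Q i = mat 1) \<longrightarrow>
          (\<forall>m\<in>fund R. m = rem R (\<Sum>i=1..L. (W i ** Wh i) *v rem (M i) m)))
    \<and> (\<forall>m\<in>fund R. \<forall>m'\<in>fund R. (\<forall>i\<in>{1..L}. rem (M i) m = rem (M i) m') \<longrightarrow> m = m')"
proof (intro conjI allI impI ballI)
  interpret commuting_coprime_family M "{1..L}"
    using nonsing comm copr by unfold_locales auto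
  define xs where "xs = [1..<L+1]"
  have xs: "set xs = {1..L}" "distinct xs" unfolding xs_def by auto
  have nR: "nonsingular R"
    using nonsingular_mprod[of xs] xs unim
    by (auto simp: R_def xs_def nonsingular_def unimodular_def det_mul)
  have cong_R: "mat_cong R u v" if "\<forall>i\<in>{1..L}. mat_cong (M i) u v" for u v
  proof -
    have "mat_cong (mprod M xs) u v" using mat_cong_mprod[of xs u v] xs that by simp
    then show ?thesis unfolding R_def xs_def by (rule mat_cong_mult_unimodular[OF unim])
  qed
  have W: "W i = mprod M (filter (\<lambda>j. j \<noteq> i) xs)" for i unfolding W_def xs_def ..
  show "\<exists>Wh Q. W i ** Wh + M i ** Q = mat 1" if "i \<in> {1..L}" for i
    using bezout_complement[of xs i] xs that unfolding W by simp
  show "m = rem R (\<Sum>i=1..L. (W i ** Wh i) *v rem (M i) m)"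
    if "\<forall>i\<in>{1..L}. W i ** Wh i + M i ** Q i = mat 1" "m \<in> fund R" for Wh Q m
  proof (rule rem_eqI[OF nR \<open>m \<in> fund R\<close>, symmetric], rule cong_R, rule ballI)
    fix i assume i: "i \<in> {1..L}"
    then have "mat_cong (M i) (\<Sum>j\<in>set xs. (W j ** Wh j) *v rem (M j) m) (rem (M i) m)"
      using crt_sum_cong[of xs i Wh Q] that xs unfolding W by simp
    moreover have "mat_cong (M i) (rem (M i) m) m"
      using mat_cong_sym[OF mat_cong_rem] nonsing i by blast
    ultimately show "mat_cong (M i) (\<Sum>i=1..L. (W i ** Wh i) *v rem (M i) m) m"
      unfolding xs(1) by (rule mat_cong_trans)
  qed
  show "m = m'"
    if "m \<in> fund R" "m' \<in> fund R" "\<forall>i\<in>{1..L}. rem (M i) m = rem (M i) m'" for m m'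
    using fund_cong_eq[OF nR that(1,2) cong_R] rem_eq_rem_iff nonsing that(3) by blast
qed

end
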